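(* Let $F\colon\Omega\to\Omega$ be a piecewise translation in $\mathbb{R}^d$ with $m=d+1$ branches, translation vectors $v_0,\dots,v_d$ with $v_1-v_0,\dots,v_d-v_0$ linearly independent, and suppose the torus rotation $R$ is ergodic. Then $\mathrm{Leb}(A)/\mathrm{Leb}(\mathbb{T})\in\mathbb{N}$, where $\mathrm{Leb}(\mathbb{T})=|\det(v_1-v_0,\dots,v_d-v_0)|$ is the covolume of $\mathcal{L}$.
   Context: A region is a compact subset of $\mathbb{R}^d$ which equals the closure of its interior. A piecewise translation with $m$ branches: $\Omega\subset\mathbb{R}^d$ is a region, $\Omega=P_0\cup\dots\cup P_{m-1}$ with each $P_i$ a region, distinct $P_i$ intersecting only in boundaries, $\mathrm{Leb}(\partial P_i)=0$; vectors $v_i$ satisfy $x+v_i\in\Omega$ for $x\in P_i$; $i(x)$ is an index with $x\in P_{i(x)}$ (boundary ambiguity resolved by a fixed measurable rule), and $F(x)=x+v_{i(x)}$. $\Omega_0=\Omega$, $\Omega_n=\overline{F(\Omega_{n-1})}$, $A=\bigcap_n\Omega_n$ is the attractor. $\mathcal{L}$ is the lattice generated by $v_1-v_0,\dots,v_d-v_0$, $\mathbb{T}=\mathbb{R}^d/\mathcal{L}$, $\pi\colon\mathbb{R}^d\to\mathbb{T}$ the projection, $R(\phi)=\phi+\pi(v_0)$ on $\mathbb{T}$. *)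

theory Defs
  imports "HOL-Analysis.Analysis"
begin

definition region :: "'a::topological_space set \<Rightarrow> bool" where
  "region S \<longleftrightarrow> compact S \<and> closure (interior S) = S"

fun iter_sets :: "('a::topological_space \<Rightarrow> 'a) \<Rightarrow> 'a set \<Rightarrow> nat \<Rightarrow> 'a set" where
  "iter_sets F S 0 = S"
| "iter_sets F S (Suc n) = closure (F ` iter_sets F S n)"

definition attractor :: "('a::topological_space \<Rightarrow> 'a) \<Rightarrow> 'a set \<Rightarrow> 'a set" where
  "attractor F S = (\<Inter>n. iter_sets F S n)"

definition gen_lattice :: "('n::finite \<Rightarrow> real^'n) \<Rightarrow> (real^'n) set" where
  "gen_lattice w = {x. \<exists>c::'n \<Rightarrow> int. x = (\<Sum>i\<in>UNIV. of_int (c i) *\<^sub>R w i)}"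

text \<open>Ergodicity of the rotation phi |-> phi + pi(u) on the torus R^d / L w.r.t. Haar measure,
  lifted to R^d: measurable subsets of the torus correspond to L-periodic Lebesgue-measurable
  subsets of R^d; R-invariant sets to sets invariant under translation by u; Haar-null sets to
  Lebesgue-null periodic sets.\<close>
definition torus_rotation_ergodic :: "(real^'n) set \<Rightarrow> real^'n \<Rightarrow> bool" where
  "torus_rotation_ergodic L u \<longleftrightarrow>
     (\<forall>E \<in> sets lebesgue.
        (\<forall>l\<in>L. (\<lambda>x. x + l) ` E = E) \<longrightarrow> (\<lambda>x. x + u) ` E = E \<longrightarrow>
        E \<in> null_sets lebesgue \<or> (- E) \<in> null_sets lebesgue)"

end

theory Submission
  imports Defs
begin

(* Let L be the lattice generated by the v_i - v_0, D a fundamental domain of L, and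
   N(x) = #{l \<in> L. x + l \<in> A} the number of lattice translates of x in the attractor A.
   N is L-periodic and its integral over D is Leb(A).  Off the null set of translated piece
   boundaries every point of A has an F-preimage in A, and F moves every point by v_0 modulo L;
   this yields an injection showing N(x + v_0) \<le> N(x) almost everywhere.  Translation by v_0
   preserves the finite integral of N over D, so N(x + v_0) = N(x) almost everywhere, and
   ergodicity of the rotation makes N almost everywhere equal to a constant k.
   Hence Leb(A) = k Leb(D) = k |det(v_1 - v_0, ..., v_d - v_0)|. *)

section \<open>Lebesgue measure of linear images\<close>

lemma linear_coordinate_swap: "linear (\<lambda>x::real^'n. \<chi> i. x $ Transposition.transpose m n i)"
  by (rule linearI) (simp_all add: vec_eq_iff)

lemma det_matrix_coordinate_swap:
  "\<bar>det (matrix (\<lambda>x::real^'n. \<chi> i. x $ Transposition.transpose m n i))\<bar> = 1"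
proof -
  have "matrix (\<lambda>x::real^'n. \<chi> i. x $ Transposition.transpose m n i)
      = (\<chi> i. mat 1 $ Transposition.transpose m n i)"
    by (simp add: matrix_def vec_eq_iff axis_def mat_def)
  then show ?thesis
    by (simp add: det_permute_rows permutes_swap_id sign_swap_id)
qed

lemma measure_cbox_coordinate_swap:
  fixes a b :: "real^'n"
  shows "measure lebesgue ((\<lambda>x. \<chi> i. x $ Transposition.transpose m n i) ` cbox a b)
           = measure lebesgue (cbox a b)"
proof -
  let ?\<tau> = "Transposition.transpose m n" and ?s = "\<lambda>x::real^'n. \<chi> i. x $ Transposition.transpose m n i"
  have box: "?s ` cbox a b = cbox (?s a) (?s b)"
    by (auto simp: image_iff lambda_swap_Galois mem_box_cart) (metis transpose_involutory)+
  have "(\<Prod>i\<in>UNIV. b $ ?\<tau> i - a $ ?\<tau> i) = (\<Prod>i\<in>UNIV. b $ i - a $ i)"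
    using prod.permute[OF permutes_swap_id[OF UNIV_I UNIV_I, of m n], of "\<lambda>i. b $ i - a $ i"]
    by (simp add: o_def)
  then show ?thesis
    using image_is_empty[of ?s "cbox a b"] by (simp add: box content_cbox_if_cart)
qed

lemma linear_shear: "linear (\<lambda>x::real^'n. \<chi> i. if i = m then x$m + x$n else x$i)"
  by (rule linearI) (auto simp: vec_eq_iff algebra_simps)

lemma det_matrix_shear:
  assumes "m \<noteq> n"
  shows "det (matrix (\<lambda>x::real^'n. \<chi> i. if i = m then x$m + x$n else x$i)) = 1"
proof -
  have "matrix (\<lambda>x::real^'n. \<chi> i. if i = m then x$m + x$n else x$i)
      = (\<chi> k. if k = m then row m (mat 1) + 1 *s row n (mat 1) else row k (mat 1))"
    by (auto simp: matrix_def axis_def row_def mat_def vec_eq_iff)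
  then show ?thesis
    using det_row_operation[OF assms, of "mat 1 :: real^'n^'n" 1] by simp
qed

lemma measure_cbox_shear:
  fixes a b :: "real^'n"
  assumes "m \<noteq> n"
  shows "measure lebesgue ((\<lambda>x. \<chi> i. if i = m then x$m + x$n else x$i) ` cbox a b)
           = measure lebesgue (cbox a b)"
proof (cases "cbox a b = {}")
  case False
  define h :: "real^'n \<Rightarrow> real^'n" where "h x = (\<chi> i. if i = m then x$m + x$n else x$i)" for x
  (* measure_shear_interval needs 0 \<le> a$n, so first shift the box along the n-th axis. *)
  define t :: "real^'n" where "t = axis n (- a $ n)"
  have translate: "cbox (a + t) (b + t) = (\<lambda>x. t + x) ` cbox a b"
    by (simp add: add.commute[of _ t] cbox_translation)
  have "linear h"
    unfolding h_def[abs_def] by (rule linear_shear)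
  then have "(\<lambda>x. x - h t) ` h ` cbox (a + t) (b + t) = h ` cbox a b"
    by (simp add: translate image_image linear_add)
  then have "measure lebesgue (h ` cbox a b) = measure lebesgue (h ` cbox (a + t) (b + t))"
    by (metis measure_translation_subtract)
  also have "\<dots> = measure lebesgue (cbox (a + t) (b + t))"
  proof -
    have "cbox (a + t) (b + t) \<noteq> {}"
      using False by (simp add: translate)
    moreover have "0 \<le> (a + t) $ n"
      by (simp add: t_def)
    ultimately show ?thesis
      unfolding h_def using assms by (rule measure_shear_interval[rotated])
  qed
  also have "\<dots> = measure lebesgue (cbox a b)"
    by (simp add: translate measure_translation)
  finally show ?thesis
    by (simp add: h_def)
qed simp

definition scales_measure_by_det :: "(real^'n \<Rightarrow> real^'n) \<Rightarrow> bool" where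
  "scales_measure_by_det f \<longleftrightarrow> (\<forall>S \<in> lmeasurable.
    f ` S \<in> lmeasurable \<and> measure lebesgue (f ` S) = \<bar>det (matrix f)\<bar> * measure lebesgue S)"

lemma scales_measure_by_det_comp:
  fixes g h :: "real^'n \<Rightarrow> real^'n"
  assumes "linear g" "linear h" "scales_measure_by_det g" "scales_measure_by_det h"
  shows "scales_measure_by_det (g \<circ> h)"
  unfolding scales_measure_by_det_def
proof
  fix S :: "(real^'n) set"
  assume "S \<in> lmeasurable"
  with assms(4) have hS: "h ` S \<in> lmeasurable"
    and "measure lebesgue (h ` S) = \<bar>det (matrix h)\<bar> * measure lebesgue S"
    by (auto simp: scales_measure_by_det_def)
  moreover have "g ` h ` S \<in> lmeasurable"
    and "measure lebesgue (g ` h ` S) = \<bar>det (matrix g)\<bar> * measure lebesgue (h ` S)"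
    using assms(3) hS by (auto simp: scales_measure_by_det_def)
  ultimately show "(g \<circ> h) ` S \<in> lmeasurable \<and>
      measure lebesgue ((g \<circ> h) ` S) = \<bar>det (matrix (g \<circ> h))\<bar> * measure lebesgue S"
    by (simp add: image_comp matrix_compose[OF assms(2,1)] det_mul abs_mult)
qed

lemma scales_measure_by_det_unimodular:
  fixes g :: "real^'n \<Rightarrow> real^'n"
  assumes "linear g" "\<bar>det (matrix g)\<bar> = 1"
    and "\<And>a b. measure lebesgue (g ` cbox a b) = measure lebesgue (cbox a b)"
  shows "scales_measure_by_det g"
  unfolding scales_measure_by_det_def
proof
  fix S :: "(real^'n) set"
  assume "S \<in> lmeasurable"
  have "g ` S \<in> lmeasurable \<and> 1 * measure lebesgue S = measure lebesgue (g ` S)"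
    using assms(3) by (intro measure_linear_sufficient[OF assms(1) \<open>S \<in> lmeasurable\<close>]) simp
  with assms(2) show "g ` S \<in> lmeasurable \<and>
      measure lebesgue (g ` S) = \<bar>det (matrix g)\<bar> * measure lebesgue S"
    by simp
qed

lemma scales_measure_by_det_singular:
  fixes g :: "real^'n \<Rightarrow> real^'n"
  assumes "linear g" "\<not> inj g"
  shows "scales_measure_by_det g"
proof -
  have "det (matrix g) = 0" and "negligible (g ` S)" for S
    using det_nz_iff_inj[OF assms(1)] negligible_linear_singular_image[OF assms] assms(2) by auto
  then show ?thesis
    by (simp add: scales_measure_by_det_def negligible_imp_measurable negligible_imp_measure0)
qed

(* The library's measure_linear_image is stated for well-ordered index types only;
   the reduction to elementary matrices works for any finite index type. *)
lemma scales_measure_by_det_linear: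
  fixes f :: "real^'n \<Rightarrow> real^'n"
  assumes "linear f"
  shows "scales_measure_by_det f"
  using assms
proof (rule induct_linear_elementary)
  fix g :: "real^'n \<Rightarrow> real^'n" and i
  assume g: "linear g" "\<And>x. g x $ i = 0"
  then have "\<not> inj g"
    by (metis linear_injective_imp_surjective one_neq_zero surjE vec_component)
  with g(1) show "scales_measure_by_det g"
    by (rule scales_measure_by_det_singular)
next
  fix c :: "'n \<Rightarrow> real"
  have "det (matrix (\<lambda>x. \<chi> i. c i * x $ i)) = prod c UNIV"
    by (simp add: det_diagonal matrix_def axis_def)
  then show "scales_measure_by_det (\<lambda>x. \<chi> i. c i * x $ i)"
    by (simp add: scales_measure_by_det_def measurable_stretch measure_stretch)
next
  fix m n :: 'n
  show "scales_measure_by_det (\<lambda>x. \<chi> i. x $ Transposition.transpose m n i)"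
    using linear_coordinate_swap det_matrix_coordinate_swap measure_cbox_coordinate_swap
    by (rule scales_measure_by_det_unimodular)
next
  fix m n :: 'n
  assume "m \<noteq> n"
  then have "\<bar>det (matrix (\<lambda>x::real^'n. \<chi> i. if i = m then x$m + x$n else x$i))\<bar> = 1"
    by (simp add: det_matrix_shear)
  with linear_shear show "scales_measure_by_det (\<lambda>x. \<chi> i. if i = m then x$m + x$n else x$i)"
    using measure_cbox_shear[OF \<open>m \<noteq> n\<close>] by (rule scales_measure_by_det_unimodular)
qed (rule scales_measure_by_det_comp)

lemma measure_linear_image_det:
  fixes f :: "real^'n \<Rightarrow> real^'n"
  assumes "linear f" "S \<in> lmeasurable"
  shows "f ` S \<in> lmeasurable" "measure lebesgue (f ` S) = \<bar>det (matrix f)\<bar> * measure lebesgue S"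
  using scales_measure_by_det_linear[OF assms(1)] assms(2)
  by (simp_all add: scales_measure_by_det_def)

lemma measure_half_open_unit_cube:
  "{t::real^'n. \<forall>i. 0 \<le> t $ i \<and> t $ i < 1} \<in> lmeasurable"
  "measure lebesgue {t::real^'n. \<forall>i. 0 \<le> t $ i \<and> t $ i < 1} = 1"
proof -
  define H :: "(real^'n) set" where "H = {t. \<forall>i. 0 \<le> t $ i \<and> t $ i < 1}"
  have [measurable]: "H \<in> sets borel"
    unfolding H_def by measurable
  have H_cbox: "H \<subseteq> cbox 0 1"
    by (auto simp: H_def mem_box_cart less_imp_le)
  have "cbox 0 1 - H \<in> null_sets lborel"
  proof (rule null_sets_subset)
    show "cbox 0 1 - H \<subseteq> cbox 0 1 - box 0 1"
      by (auto simp: H_def mem_box_cart less_le)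
  qed (simp_all add: null_sets_cbox_Diff_box)
  then have "measure lborel (cbox 0 1 - (cbox 0 1 - H)) = measure lborel (cbox (0::real^'n) 1)"
    by (simp add: measure_Diff_null_set)
  then have "measure lebesgue H = measure lborel (cbox (0::real^'n) 1)"
    using H_cbox by (simp add: Diff_Diff_Int Int_absorb1)
  also have "\<dots> = 1"
    by (simp add: content_cbox_if_cart interval_eq_empty_cart)
  finally show "measure lebesgue H = 1" .
  show "H \<in> lmeasurable"
    using H_cbox by (intro bounded_set_imp_lmeasurable) (auto intro: bounded_subset[OF bounded_cbox])
qed

section \<open>Translations and ergodic rotations\<close>

lemma nn_integral_lborel_translate:
  fixes h :: "'a::euclidean_space \<Rightarrow> ennreal"
  assumes [measurable]: "h \<in> borel_measurable borel"
  shows "(\<integral>\<^sup>+x. h (x + a) \<partial>lborel) = (\<integral>\<^sup>+x. h x \<partial>lborel)"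
proof -
  have "(\<integral>\<^sup>+x. h (x + a) \<partial>lborel) = (\<integral>\<^sup>+x. h x \<partial>distr lborel borel ((+) a))"
    by (subst nn_integral_distr) (auto simp: add.commute)
  then show ?thesis
    by (simp add: lborel_distr_plus)
qed

lemma AE_lborel_translate:
  fixes a :: "'a::euclidean_space"
  assumes "AE x in lborel. P x"
  shows "AE x in lborel. P (x + a)"
proof -
  obtain N where N: "{x. \<not> P x} \<subseteq> N" "N \<in> null_sets lborel"
    using assms by (auto elim!: AE_E simp: null_sets_def)
  have "{x. x - (- a) \<in> N} \<in> null_sets lborel"
    using N(2) by (rule null_sets_translation)
  moreover have "{x. \<not> P (x + a)} \<subseteq> {x. x - (- a) \<in> N}"
    using N(1) by auto
  ultimately show ?thesis
    by (auto intro!: AE_I')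
qed

lemma image_translation_eq:
  fixes E :: "'a::ab_group_add set"
  assumes "\<And>x. x + a \<in> E \<longleftrightarrow> x \<in> E"
  shows "(\<lambda>x. x + a) ` E = E"
  using assms by (auto simp: image_iff) (metis diff_add_cancel)

lemma AE_translate_orbit:
  fixes u :: "'a::euclidean_space"
  assumes "AE x in lborel. g (x + u) = g x"
  shows "AE x in lborel. \<forall>n::int. g (x + of_int n *\<^sub>R u) = g x"
proof -
  have "AE x in lborel. \<forall>n::int. g (x + of_int n *\<^sub>R u + u) = g (x + of_int n *\<^sub>R u)"
    unfolding AE_all_countable by (intro allI AE_lborel_translate[OF assms])
  then show ?thesis
  proof (rule eventually_mono, intro allI)
    fix x and n :: int
    assume step: "\<forall>n::int. g (x + of_int n *\<^sub>R u + u) = g (x + of_int n *\<^sub>R u)"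
    have succ: "x + of_int (i + 1) *\<^sub>R u = x + of_int i *\<^sub>R u + u" for i :: int
      by (simp add: algebra_simps)
    show "g (x + of_int n *\<^sub>R u) = g x"
    proof (induction n rule: int_induct[where k=0])
      case (step1 i)
      then show ?case
        using step succ by metis
    next
      case (step2 i)
      then show ?case
        using step succ[of "i - 1"] by (metis diff_add_cancel)
    qed simp
  qed
qed

lemma torus_rotation_ergodicD:
  assumes "torus_rotation_ergodic L u" "E \<in> sets borel"
    and "\<And>l. l \<in> L \<Longrightarrow> (\<lambda>x. x + l) ` E = E" "(\<lambda>x. x + u) ` E = E"
  shows "E \<in> null_sets lborel \<or> - E \<in> null_sets lborel"
proof -
  have "E \<in> null_sets lebesgue \<or> - E \<in> null_sets lebesgue"
    using assms unfolding torus_rotation_ergodic_def by auto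
  then show ?thesis
    using assms(2) by (auto simp: null_sets_completion_iff)
qed

lemma AE_eq_const_if_superlevel_sets_trivial:
  fixes g :: "'a::euclidean_space \<Rightarrow> nat"
  assumes trivial: "\<And>k. E k \<in> null_sets lborel \<or> - E k \<in> null_sets lborel"
    and superlevel: "AE x in lborel. \<forall>k. x \<in> E k \<longleftrightarrow> k \<le> g x"
  shows "\<exists>k. AE x in lborel. g x = k"
proof -
  have nontrivial: "\<not> (AE x in (lborel :: 'a measure). False)"
    by (simp add: eventually_False ae_filter_eq_bot_iff)
  have "\<exists>k. E k \<in> null_sets lborel"
  proof (rule ccontr)
    assume "\<nexists>k. E k \<in> null_sets lborel"
    then have "AE x in lborel. x \<notin> - E k" for k
      using trivial by (metis AE_not_in)
    then have "AE x in lborel. \<forall>k. x \<in> E k"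
      by (simp add: AE_all_countable)
    with superlevel have "AE x in (lborel :: 'a measure). False"
      by eventually_elim (metis Suc_n_not_le_n)
    with nontrivial show False ..
  qed
  then have least: "E (LEAST k. E k \<in> null_sets lborel) \<in> null_sets lborel"
    by (rule LeastI_ex)
  have "E 0 \<notin> null_sets lborel"
  proof
    assume "E 0 \<in> null_sets lborel"
    from AE_not_in[OF this] superlevel have "AE x in (lborel :: 'a measure). False"
      by eventually_elim simp
    with nontrivial show False ..
  qed
  with least obtain k where k: "(LEAST k. E k \<in> null_sets lborel) = Suc k"
    by (metis not0_implies_Suc)
  then have conull: "- E k \<in> null_sets lborel"
    using trivial by (metis lessI not_less_Least)
  have "AE x in lborel. g x = k"
    using AE_not_in[OF conull] AE_not_in[OF least[unfolded k]] superlevel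
    by eventually_elim (metis ComplI not_less_eq_eq le_antisym)
  then show ?thesis ..
qed

lemma torus_rotation_ergodic_AE_const:
  fixes g :: "real^'n \<Rightarrow> nat"
  assumes ergodic: "torus_rotation_ergodic L u"
    and meas: "(\<lambda>x. real (g x)) \<in> borel_measurable borel"
    and periodic: "\<And>x l. l \<in> L \<Longrightarrow> g (x + l) = g x"
    and invariant: "AE x in lborel. g (x + u) = g x"
  shows "\<exists>k. AE x in lborel. g x = k"
proof -
  (* Quantifying over the whole orbit of u makes E k exactly invariant, as the definition of
     ergodicity demands; almost everywhere E k is the superlevel set {x. k \<le> g x}. *)
  define E where "E k = {x. \<forall>n::int. real k \<le> real (g (x + of_int n *\<^sub>R u))}" for k :: nat
  have "E k \<in> null_sets lborel \<or> - E k \<in> null_sets lborel" for k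
  proof (rule torus_rotation_ergodicD[OF ergodic])
    have [measurable]: "(\<lambda>x. real (g (x + of_int n *\<^sub>R u))) \<in> borel_measurable borel" for n :: int
      using measurable_compose[OF _ meas, of "\<lambda>x. x + of_int n *\<^sub>R u"] by simp
    show "E k \<in> sets borel"
      unfolding E_def by measurable
    show "(\<lambda>x. x + l) ` E k = E k" if "l \<in> L" for l
    proof (rule image_translation_eq)
      have "g (x + l + of_int n *\<^sub>R u) = g (x + of_int n *\<^sub>R u)" for x n
        using periodic[OF that, of "x + of_int n *\<^sub>R u"] by (simp add: algebra_simps)
      then show "x + l \<in> E k \<longleftrightarrow> x \<in> E k" for x
        by (simp add: E_def)
    qed
    show "(\<lambda>x. x + u) ` E k = E k"
    proof (rule image_translation_eq)
      have shift: "(\<forall>n::int. P (n + 1)) \<longleftrightarrow> (\<forall>n. P n)" for P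
        by (metis diff_add_cancel)
      have succ: "x + u + of_int n *\<^sub>R u = x + of_int (n + 1) *\<^sub>R u" for x n
        by (simp add: algebra_simps)
      show "x + u \<in> E k \<longleftrightarrow> x \<in> E k" for x
        unfolding E_def mem_Collect_eq succ
        by (rule shift[of "\<lambda>n. real k \<le> real (g (x + of_int n *\<^sub>R u))"])
    qed
  qed
  moreover have "AE x in lborel. \<forall>k. x \<in> E k \<longleftrightarrow> k \<le> g x"
    using AE_translate_orbit[OF invariant] by eventually_elim (auto simp: E_def)
  ultimately show ?thesis
    by (rule AE_eq_const_if_superlevel_sets_trivial)
qed

section \<open>Lattices, fundamental domains and lattice point counts\<close>

lemma det_nonzero_if_independent_rows:
  fixes w :: "'n::finite \<Rightarrow> real^'n"
  assumes "inj w" "independent (range w)"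
  shows "det (\<chi> i. w i) \<noteq> 0"
proof -
  have "c i = 0" if "(\<Sum>i\<in>UNIV. c i *s row i (\<chi> i. w i)) = 0" for c i
  proof -
    have "(\<Sum>v\<in>range w. c (inv w v) *\<^sub>R v) = (\<Sum>i\<in>UNIV. c i *\<^sub>R w i)"
      using assms(1) by (simp add: sum.reindex)
    also have "\<dots> = 0"
      using that by (simp add: row_def scalar_mult_eq_scaleR vec_lambda_eta)
    finally have "c (inv w (w i)) = 0"
      by (intro independentD[OF assms(2)]) auto
    then show "c i = 0"
      using assms(1) by simp
  qed
  then have "invertible (\<chi> i. w i)"
    unfolding invertible_right_inverse matrix_right_invertible_independent_rows by blast
  then show ?thesis
    by (simp add: invertible_det_nz)
qed

lemma differences_in_gen_lattice:
  fixes v :: "'n option \<Rightarrow> real^'n"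
  shows "v k - v None \<in> gen_lattice (\<lambda>i. v (Some i) - v None)"
proof (cases k)
  case None
  then show ?thesis
    unfolding gen_lattice_def by (auto intro!: exI[of _ "\<lambda>_. 0"])
next
  case (Some i)
  have "(\<Sum>j\<in>UNIV. of_int (if j = i then 1 else 0) *\<^sub>R (v (Some j) - v None))
      = (\<Sum>j\<in>UNIV. if j = i then v (Some j) - v None else 0)"
    by (rule sum.cong) auto
  then show ?thesis
    unfolding gen_lattice_def by (auto simp: Some intro!: exI[of _ "\<lambda>j. if j = i then 1 else 0"])
qed

locale lattice_basis =
  fixes w :: "'n::finite \<Rightarrow> real^'n"
  assumes det_basis_nonzero: "det (\<chi> i. w i) \<noteq> 0"
begin

definition generator_matrix :: "real^'n^'n" where
  "generator_matrix = transpose (\<chi> i. w i)"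

definition frame :: "real^'n \<Rightarrow> real^'n" where
  "frame t = generator_matrix *v t"

definition coords :: "real^'n \<Rightarrow> real^'n" where
  "coords x = matrix_inv generator_matrix *v x"

lemma generator_matrix_inverse:
  "generator_matrix ** matrix_inv generator_matrix = mat 1"
  "matrix_inv generator_matrix ** generator_matrix = mat 1"
proof -
  have "invertible generator_matrix"
    using det_basis_nonzero by (simp add: generator_matrix_def invertible_det_nz)
  then show "generator_matrix ** matrix_inv generator_matrix = mat 1"
    "matrix_inv generator_matrix ** generator_matrix = mat 1"
    unfolding invertible_def matrix_inv_def by (metis (mono_tags, lifting) someI_ex)+
qed

lemma frame_coords [simp]: "frame (coords x) = x"
  by (simp add: frame_def coords_def matrix_vector_mul_assoc generator_matrix_inverse)

lemma coords_frame [simp]: "coords (frame t) = t"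
  by (simp add: frame_def coords_def matrix_vector_mul_assoc generator_matrix_inverse)

lemma linear_frame: "linear frame" and linear_coords: "linear coords"
  by (simp_all add: frame_def[abs_def] coords_def[abs_def])

lemma frame_eq_sum: "frame t = (\<Sum>i\<in>UNIV. t $ i *\<^sub>R w i)"
  by (simp add: frame_def generator_matrix_def matrix_mult_sum row_def scalar_mult_eq_scaleR)

lemma coords_add: "coords (x + y) = coords x + coords y"
  by (simp add: coords_def matrix_vector_right_distrib)

lemma mem_gen_lattice_iff: "x \<in> gen_lattice w \<longleftrightarrow> (\<forall>i. coords x $ i \<in> \<int>)"
proof
  assume "x \<in> gen_lattice w"
  then obtain c :: "'n \<Rightarrow> int" where "x = frame (\<chi> i. of_int (c i))"
    by (auto simp: gen_lattice_def frame_eq_sum)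
  then show "\<forall>i. coords x $ i \<in> \<int>"
    by simp
next
  assume int: "\<forall>i. coords x $ i \<in> \<int>"
  have "x = (\<Sum>i\<in>UNIV. coords x $ i *\<^sub>R w i)"
    by (metis frame_coords frame_eq_sum)
  also have "\<dots> = (\<Sum>i\<in>UNIV. of_int \<lfloor>coords x $ i\<rfloor> *\<^sub>R w i)"
    using int by (intro sum.cong refl) (metis Ints_cases floor_of_int)
  finally show "x \<in> gen_lattice w"
    unfolding gen_lattice_def by (auto intro!: exI[of _ "\<lambda>i. \<lfloor>coords x $ i\<rfloor>"])
qed

lemma gen_lattice_add: "l \<in> gen_lattice w \<Longrightarrow> l' \<in> gen_lattice w \<Longrightarrow> l + l' \<in> gen_lattice w"
  by (simp add: mem_gen_lattice_iff coords_add)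

lemma gen_lattice_uminus: "l \<in> gen_lattice w \<Longrightarrow> - l \<in> gen_lattice w"
  by (simp add: mem_gen_lattice_iff linear_neg[OF linear_coords])

lemma gen_lattice_diff: "l \<in> gen_lattice w \<Longrightarrow> l' \<in> gen_lattice w \<Longrightarrow> l - l' \<in> gen_lattice w"
  using gen_lattice_add gen_lattice_uminus by fastforce

lemma countable_gen_lattice: "countable (gen_lattice w)"
proof -
  have "gen_lattice w = (\<lambda>c::'n \<Rightarrow> int. \<Sum>i\<in>UNIV. of_int (c i) *\<^sub>R w i) ` UNIV"
    by (auto simp: gen_lattice_def)
  then show ?thesis
    by simp
qed

definition fundamental_domain :: "(real^'n) set" where
  "fundamental_domain = frame ` {t. \<forall>i. 0 \<le> t $ i \<and> t $ i < 1}"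

lemma image_frame: "frame ` T = {x. coords x \<in> T}"
proof (intro set_eqI iffI)
  fix x
  assume "x \<in> {x. coords x \<in> T}"
  then show "x \<in> frame ` T"
    by (metis frame_coords image_eqI mem_Collect_eq)
qed auto

lemma mem_fundamental_domain: "x \<in> fundamental_domain \<longleftrightarrow> (\<forall>i. 0 \<le> coords x $ i \<and> coords x $ i < 1)"
  by (simp add: fundamental_domain_def image_frame)

lemma fundamental_domain_borel [measurable]: "fundamental_domain \<in> sets borel"
proof -
  have "continuous_on UNIV coords"
    by (rule linear_continuous_on) (simp add: linear_conv_bounded_linear[symmetric] linear_coords)
  then have [measurable]: "coords \<in> borel_measurable borel"
    by (rule borel_measurable_continuous_onI)
  have "fundamental_domain = {x. \<forall>i. 0 \<le> coords x $ i \<and> coords x $ i < 1}"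
    by (auto simp: mem_fundamental_domain)
  also have "\<dots> \<in> sets borel"
    by measurable
  finally show ?thesis .
qed

lemma ex1_lattice_translate_in_fundamental_domain:
  "\<exists>!l. l \<in> gen_lattice w \<and> x + l \<in> fundamental_domain"
proof
  let ?l = "frame (\<chi> i. - of_int \<lfloor>coords x $ i\<rfloor>)"
  show "?l \<in> gen_lattice w \<and> x + ?l \<in> fundamental_domain"
    by (simp add: mem_gen_lattice_iff mem_fundamental_domain coords_add) linarith
  fix l
  assume l: "l \<in> gen_lattice w \<and> x + l \<in> fundamental_domain"
  have "coords l $ i = - of_int \<lfloor>coords x $ i\<rfloor>" for i
  proof -
    obtain k where "coords l $ i = of_int k"
      using l by (meson Ints_cases mem_gen_lattice_iff)
    moreover have "0 \<le> coords x $ i + coords l $ i \<and> coords x $ i + coords l $ i < 1"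
      using l by (simp add: mem_fundamental_domain coords_add)
    ultimately show ?thesis
      by (simp add: floor_unique[of "- k"])
  qed
  then have "coords l = coords ?l"
    by (simp add: vec_eq_iff)
  then show "l = ?l"
    by (metis frame_coords)
qed

lemma emeasure_fundamental_domain:
  "emeasure lborel fundamental_domain = \<bar>det (\<chi> i. w i)\<bar>"
proof -
  define H :: "(real^'n) set" where "H = {t. \<forall>i. 0 \<le> t $ i \<and> t $ i < 1}"
  have "H \<in> lmeasurable" "measure lebesgue H = 1"
    unfolding H_def by (rule measure_half_open_unit_cube)+
  have D_eq: "fundamental_domain = frame ` H"
    by (simp add: fundamental_domain_def H_def)
  have det_frame: "\<bar>det (matrix frame)\<bar> = \<bar>det (\<chi> i. w i)\<bar>"
  proof -
    have "matrix frame = generator_matrix"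
      by (simp add: frame_def[abs_def])
    then show ?thesis
      by (simp add: generator_matrix_def)
  qed
  have D: "fundamental_domain \<in> lmeasurable"
    "measure lebesgue fundamental_domain = \<bar>det (\<chi> i. w i)\<bar>"
    using measure_linear_image_det[OF linear_frame \<open>H \<in> lmeasurable\<close>]
    unfolding D_eq det_frame \<open>measure lebesgue H = 1\<close> by simp_all
  have "emeasure lborel fundamental_domain = emeasure lebesgue fundamental_domain"
    using fundamental_domain_borel by simp
  also have "\<dots> = measure lebesgue fundamental_domain"
    using D(1) by (rule emeasure_eq_measure2)
  finally show ?thesis
    using D(2) by simp
qed

lemma uniform_discrete_gen_lattice: "uniform_discrete (gen_lattice w)"
proof -
  have "bounded_linear coords"
    using linear_coords by (simp add: linear_conv_bounded_linear)
  then obtain K where K: "\<And>y. norm (coords y) \<le> norm y * K" "K > 0"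
    using bounded_linear.pos_bounded by blast
  have "l = l'" if "l \<in> gen_lattice w" "l' \<in> gen_lattice w" "dist l l' < 1 / K" for l l'
  proof -
    have "norm (coords (l - l')) \<le> dist l l' * K"
      using K(1) by (simp add: dist_norm)
    also have "\<dots> < 1"
      using that(3) K(2) by (simp add: pos_less_divide_eq)
    finally have small: "\<bar>coords (l - l') $ i\<bar> < 1" for i
      by (rule le_less_trans[OF component_le_norm_cart])
    have ints: "coords (l - l') $ i \<in> \<int>" for i
      using gen_lattice_diff[OF that(1,2)] by (simp add: mem_gen_lattice_iff)
    have "coords (l - l') $ i = 0" for i
    proof (rule ccontr)
      assume "coords (l - l') $ i \<noteq> 0"
      with ints have "1 \<le> \<bar>coords (l - l') $ i\<bar>"
        by (rule Ints_nonzero_abs_ge1)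
      with small[of i] show False
        by simp
    qed
    then have "coords (l - l') = 0"
      by (simp add: vec_eq_iff)
    then have "l - l' = frame 0"
      by (metis frame_coords)
    then show "l = l'"
      by (simp add: frame_def)
  qed
  then show ?thesis
    unfolding uniform_discrete_def using K(2) by (intro exI[of _ "1 / K"]) auto
qed

lemma finite_lattice_points:
  assumes "bounded A"
  shows "finite {l \<in> gen_lattice w. x + l \<in> A}"
proof -
  have "{l \<in> gen_lattice w. x + l \<in> A} \<subseteq> (\<lambda>a. a - x) ` A"
    by force
  then have "bounded {l \<in> gen_lattice w. x + l \<in> A}"
    using assms bounded_subset bounded_translation_minus by blast
  moreover have "uniform_discrete {l \<in> gen_lattice w. x + l \<in> A}"
    using uniform_discrete_gen_lattice by (rule uniform_discrete_subset) auto
  ultimately show ?thesis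
    using uniform_discrete_finite_iff by blast
qed

lemma nn_integral_indicator_fundamental_domain:
  "(\<integral>\<^sup>+l. indicator fundamental_domain (x + l) \<partial>count_space (gen_lattice w)) = 1"
proof -
  obtain l0 where l0: "l0 \<in> gen_lattice w"
    and unique: "\<And>l. l \<in> gen_lattice w \<Longrightarrow> x + l \<in> fundamental_domain \<longleftrightarrow> l = l0"
    using ex1_lattice_translate_in_fundamental_domain[of x] by metis
  have "(\<integral>\<^sup>+l. indicator fundamental_domain (x + l) \<partial>count_space (gen_lattice w))
      = (\<integral>\<^sup>+l. indicator {l0} l \<partial>count_space (gen_lattice w))"
    by (rule nn_integral_cong) (auto simp: unique l0 split: split_indicator)
  also have "\<dots> = 1"
    using l0 by (simp add: emeasure_count_space_finite)
  finally show ?thesis .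
qed

lemma borel_measurable_periodize:
  assumes [measurable]: "h \<in> borel_measurable borel"
  shows "(\<lambda>x. \<integral>\<^sup>+l. h (x + l) \<partial>count_space (gen_lattice w)) \<in> borel_measurable borel"
proof -
  have "(\<lambda>p. h (fst p + snd p)) \<in> borel_measurable (borel \<Otimes>\<^sub>M count_space (gen_lattice w))"
    using measurable_compose_countable'[where f="\<lambda>l p. h (fst p + l)" and g=snd,
        OF _ measurable_snd countable_gen_lattice]
    by measurable
  then show ?thesis
    using sigma_finite_measure.borel_measurable_nn_integral[of "count_space (gen_lattice w)"
        "\<lambda>x l. h (x + l)" borel]
      sigma_finite_measure_count_space_countable[OF countable_gen_lattice]
    by (simp add: case_prod_beta')
qed

lemma nn_integral_periodize:
  assumes [measurable]: "h \<in> borel_measurable borel"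
  shows "(\<integral>\<^sup>+x. h x \<partial>lborel) =
    (\<integral>\<^sup>+y. (\<integral>\<^sup>+l. h (y + l) \<partial>count_space (gen_lattice w)) * indicator fundamental_domain y \<partial>lborel)"
proof -
  let ?L = "count_space (gen_lattice w)" and ?D = fundamental_domain
  (* Insert 1 = (\<Sum>l. indicator D (x + l)), swap sum and integral, and substitute y = x + l. *)
  have "(\<integral>\<^sup>+x. h x \<partial>lborel) = (\<integral>\<^sup>+x. (\<integral>\<^sup>+l. h x * indicator ?D (x + l) \<partial>?L) \<partial>lborel)"
    by (simp add: nn_integral_cmult nn_integral_indicator_fundamental_domain)
  also have "\<dots> = (\<integral>\<^sup>+l. (\<integral>\<^sup>+x. h x * indicator ?D (x + l) \<partial>lborel) \<partial>?L)"
    by (rule nn_integral_count_space_nn_integral) (simp_all add: countable_gen_lattice)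
  also have "\<dots> = (\<integral>\<^sup>+l. (\<integral>\<^sup>+y. h (y - l) * indicator ?D y \<partial>lborel) \<partial>?L)"
  proof (rule nn_integral_cong)
    fix l
    show "(\<integral>\<^sup>+x. h x * indicator ?D (x + l) \<partial>lborel) = (\<integral>\<^sup>+y. h (y - l) * indicator ?D y \<partial>lborel)"
      using nn_integral_lborel_translate[of "\<lambda>y. h (y - l) * indicator ?D y" l] by simp
  qed
  also have "\<dots> = (\<integral>\<^sup>+y. (\<integral>\<^sup>+l. h (y - l) \<partial>?L) * indicator ?D y \<partial>lborel)"
    by (subst nn_integral_count_space_nn_integral[symmetric])
      (simp_all add: countable_gen_lattice nn_integral_multc)
  also have "\<dots> = (\<integral>\<^sup>+y. (\<integral>\<^sup>+l. h (y + l) \<partial>?L) * indicator ?D y \<partial>lborel)"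
  proof -
    have "bij_betw uminus (gen_lattice w) (gen_lattice w)"
      by (rule bij_betwI[where g=uminus]) (simp_all add: gen_lattice_uminus)
    then have "(\<integral>\<^sup>+l. h (y - l) \<partial>?L) = (\<integral>\<^sup>+l. h (y + l) \<partial>?L)" for y
      using nn_integral_bij_count_space[of uminus _ _ "\<lambda>l. h (y + l)"] by simp
    then show ?thesis
      by simp
  qed
  finally show ?thesis .
qed

lemma nn_integral_fundamental_domain_translate:
  assumes [measurable]: "f \<in> borel_measurable borel"
    and periodic: "\<And>x l. l \<in> gen_lattice w \<Longrightarrow> f (x + l) = f x"
  shows "(\<integral>\<^sup>+y. f (y + a) * indicator fundamental_domain y \<partial>lborel)
    = (\<integral>\<^sup>+y. f y * indicator fundamental_domain y \<partial>lborel)"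
proof -
  let ?L = "count_space (gen_lattice w)" and ?D = fundamental_domain
  have "(\<integral>\<^sup>+y. f (y + a) * indicator ?D y \<partial>lborel) = (\<integral>\<^sup>+x. f x * indicator ?D (x - a) \<partial>lborel)"
    using nn_integral_lborel_translate[of "\<lambda>x. f x * indicator ?D (x - a)" a] by simp
  also have "\<dots> = (\<integral>\<^sup>+y. (\<integral>\<^sup>+l. f (y + l) * indicator ?D (y + l - a) \<partial>?L) * indicator ?D y \<partial>lborel)"
    by (rule nn_integral_periodize) simp
  also have "\<dots> = (\<integral>\<^sup>+y. f y * indicator ?D y \<partial>lborel)"
  proof (rule nn_integral_cong)
    fix y
    have "(\<integral>\<^sup>+l. f (y + l) * indicator ?D (y + l - a) \<partial>?L) = (\<integral>\<^sup>+l. f y * indicator ?D ((y - a) + l) \<partial>?L)"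
      by (rule nn_integral_cong) (simp add: periodic diff_add_eq)
    also have "\<dots> = f y"
      by (simp add: nn_integral_cmult nn_integral_indicator_fundamental_domain)
    finally show "(\<integral>\<^sup>+l. f (y + l) * indicator ?D (y + l - a) \<partial>?L) * indicator ?D y = f y * indicator ?D y"
      by simp
  qed
  finally show ?thesis .
qed

lemma periodic_null_set:
  assumes [measurable]: "B \<in> sets borel"
    and periodic: "\<And>x l. l \<in> gen_lattice w \<Longrightarrow> x + l \<in> B \<longleftrightarrow> x \<in> B"
    and null_on_domain: "AE y in lborel. y \<in> fundamental_domain \<longrightarrow> y \<notin> B"
  shows "B \<in> null_sets lborel"
proof -
  let ?L = "count_space (gen_lattice w)" and ?D = fundamental_domain
  have "emeasure lborel B = (\<integral>\<^sup>+x. indicator B x \<partial>lborel)"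
    by simp
  also have "\<dots> = (\<integral>\<^sup>+y. (\<integral>\<^sup>+l. indicator B (y + l) \<partial>?L) * indicator ?D y \<partial>lborel)"
    by (rule nn_integral_periodize) simp
  also have "\<dots> = (\<integral>\<^sup>+y. 0 \<partial>(lborel :: (real^'n) measure))"
  proof (rule nn_integral_cong_AE)
    show "AE y in lborel. (\<integral>\<^sup>+l. indicator B (y + l) \<partial>?L) * indicator ?D y = 0"
      using null_on_domain
    proof eventually_elim
      fix y
      assume "y \<in> ?D \<longrightarrow> y \<notin> B"
      moreover have "(\<integral>\<^sup>+l. indicator B (y + l) \<partial>?L) = (\<integral>\<^sup>+l. indicator B y \<partial>?L)"
        by (rule nn_integral_cong) (simp add: periodic indicator_def)
      ultimately show "(\<integral>\<^sup>+l. indicator B (y + l) \<partial>?L) * indicator ?D y = 0"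
        by (auto simp: indicator_def)
    qed
  qed
  finally show ?thesis
    by (auto intro: null_setsI)
qed

lemma AE_periodic_translate_eq:
  assumes [measurable]: "f \<in> borel_measurable borel"
    and periodic: "\<And>x l. l \<in> gen_lattice w \<Longrightarrow> f (x + l) = f x"
    and finite: "(\<integral>\<^sup>+y. f y * indicator fundamental_domain y \<partial>lborel) \<noteq> \<infinity>"
    and decreasing: "AE x in lborel. f (x + a) \<le> f x"
  shows "AE x in lborel. f (x + a) = f x"
proof -
  let ?D = fundamental_domain
  let ?f = "\<lambda>y. f y * indicator ?D y" and ?g = "\<lambda>y. f (y + a) * indicator ?D y"
  have same: "integral\<^sup>N lborel ?g = integral\<^sup>N lborel ?f"
    using periodic by (rule nn_integral_fundamental_domain_translate[OF assms(1)])
  have "(\<integral>\<^sup>+y. ?f y - ?g y \<partial>lborel) = integral\<^sup>N lborel ?f - integral\<^sup>N lborel ?g"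
    using decreasing finite same
    by (intro nn_integral_diff) (auto elim!: eventually_mono simp: indicator_def)
  also have "\<dots> = 0"
    using same finite by simp
  finally have "AE y in lborel. ?f y - ?g y = 0"
    by (subst (asm) nn_integral_0_iff_AE) auto
  with decreasing have on_domain: "AE y in lborel. y \<in> ?D \<longrightarrow> \<not> f (y + a) \<noteq> f y"
    by eventually_elim (auto simp: indicator_def dest!: ennreal_minus_eq_0)
  have "{y. f (y + a) \<noteq> f y} \<in> null_sets lborel"
  proof (rule periodic_null_set)
    show "x + l \<in> {y. f (y + a) \<noteq> f y} \<longleftrightarrow> x \<in> {y. f (y + a) \<noteq> f y}"
      if "l \<in> gen_lattice w" for x l
      using periodic[OF that, of x] periodic[OF that, of "x + a"] by (simp add: algebra_simps)
  qed (use on_domain in simp_all)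
  then show ?thesis
    by (auto dest: AE_not_in)
qed

definition lattice_count :: "(real^'n) set \<Rightarrow> real^'n \<Rightarrow> nat" where
  "lattice_count A x = card {l \<in> gen_lattice w. x + l \<in> A}"

lemma lattice_count_eq_nn_integral:
  assumes "bounded A"
  shows "of_nat (lattice_count A x) = (\<integral>\<^sup>+l. indicator A (x + l) \<partial>count_space (gen_lattice w))"
proof -
  let ?S = "{l \<in> gen_lattice w. x + l \<in> A}"
  have "(\<integral>\<^sup>+l. indicator A (x + l) \<partial>count_space (gen_lattice w))
      = (\<integral>\<^sup>+l. indicator ?S l \<partial>count_space (gen_lattice w))"
    by (rule nn_integral_cong) (simp split: split_indicator)
  also have "\<dots> = of_nat (card ?S)"
    using finite_lattice_points[OF assms] by (simp add: emeasure_count_space_finite)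
  finally show ?thesis
    by (simp add: lattice_count_def)
qed

lemma lattice_count_periodic:
  assumes "l \<in> gen_lattice w"
  shows "lattice_count A (x + l) = lattice_count A x"
proof -
  have "{m \<in> gen_lattice w. x + l + m \<in> A} = (\<lambda>m. m - l) ` {m \<in> gen_lattice w. x + m \<in> A}"
  proof (intro equalityI subsetI)
    fix m
    assume "m \<in> {m \<in> gen_lattice w. x + l + m \<in> A}"
    then show "m \<in> (\<lambda>m. m - l) ` {m \<in> gen_lattice w. x + m \<in> A}"
      using assms by (intro image_eqI[where x="l + m"]) (auto simp: gen_lattice_add add.assoc)
  qed (auto simp: assms gen_lattice_diff)
  then show ?thesis
    unfolding lattice_count_def by (simp add: card_image inj_on_def)
qed

lemma borel_measurable_lattice_count:
  assumes "bounded A" "A \<in> sets borel"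
  shows "(\<lambda>x. of_nat (lattice_count A x) :: ennreal) \<in> borel_measurable borel"
  unfolding lattice_count_eq_nn_integral[OF assms(1)]
  using assms(2) by (intro borel_measurable_periodize) simp

lemma nn_integral_lattice_count:
  assumes "bounded A" "A \<in> sets borel"
  shows "(\<integral>\<^sup>+y. of_nat (lattice_count A y) * indicator fundamental_domain y \<partial>lborel) = emeasure lborel A"
  using nn_integral_periodize[of "indicator A"] assms
  by (simp add: lattice_count_eq_nn_integral[OF assms(1)])

lemma lattice_count_translate_le:
  assumes "bounded A"
    and lattice_offset: "\<And>y. F y - (y + u) \<in> gen_lattice w"
    and covered: "\<And>l. l \<in> gen_lattice w \<Longrightarrow> x + u + l \<in> A \<Longrightarrow> x + u + l \<in> F ` A"
  shows "lattice_count A (x + u) \<le> lattice_count A x"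
proof -
  let ?S = "\<lambda>z. {l \<in> gen_lattice w. z + l \<in> A}"
  have "?S (x + u) \<subseteq> (\<lambda>l. F (x + l) - (x + u)) ` ?S x"
  proof
    fix l
    assume l: "l \<in> ?S (x + u)"
    then obtain a where a: "a \<in> A" "F a = x + u + l"
      using covered by (metis (no_types, lifting) imageE mem_Collect_eq)
    have "l - (F a - (a + u)) \<in> gen_lattice w"
      using l lattice_offset by (simp add: gen_lattice_diff)
    moreover have "l - (F a - (a + u)) = a - x"
      using a(2) by (simp add: algebra_simps)
    ultimately show "l \<in> (\<lambda>l. F (x + l) - (x + u)) ` ?S x"
      using a by (intro image_eqI[where x="a - x"]) auto
  qed
  then have "card (?S (x + u)) \<le> card ((\<lambda>l. F (x + l) - (x + u)) ` ?S x)"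
    by (intro card_mono finite_imageI finite_lattice_points assms(1))
  also have "\<dots> \<le> card (?S x)"
    by (intro card_image_le finite_lattice_points assms(1))
  finally show ?thesis
    by (simp add: lattice_count_def)
qed

lemma AE_lattice_count_translate_le:
  assumes "bounded A"
    and lattice_offset: "\<And>y. F y - (y + u) \<in> gen_lattice w"
    and covered: "AE y in lborel. y \<in> A \<longrightarrow> y \<in> F ` A"
  shows "AE x in lborel. lattice_count A (x + u) \<le> lattice_count A x"
proof -
  have "AE x in lborel. x + (u + l) \<in> A \<longrightarrow> x + (u + l) \<in> F ` A" for l
    using covered by (rule AE_lborel_translate)
  then have "AE x in lborel. \<forall>l\<in>gen_lattice w. x + u + l \<in> A \<longrightarrow> x + u + l \<in> F ` A"
    by (simp add: AE_ball_countable countable_gen_lattice add.assoc)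
  then show ?thesis
    by eventually_elim (rule lattice_count_translate_le[OF assms(1) lattice_offset], blast)
qed

theorem measure_eq_multiple_of_covolume:
  assumes "bounded A" "A \<in> sets borel"
    and lattice_offset: "\<And>y. F y - (y + u) \<in> gen_lattice w"
    and covered: "AE y in lborel. y \<in> A \<longrightarrow> y \<in> F ` A"
    and ergodic: "torus_rotation_ergodic (gen_lattice w) u"
  shows "\<exists>k::nat. measure lborel A = real k * \<bar>det (\<chi> i. w i)\<bar>"
proof -
  let ?N = "lattice_count A" and ?D = fundamental_domain
  have [measurable]: "(\<lambda>x. of_nat (?N x) :: ennreal) \<in> borel_measurable borel"
    using assms(1,2) by (rule borel_measurable_lattice_count)
  have "AE x in lborel. of_nat (?N (x + u)) = (of_nat (?N x) :: ennreal)"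
    using AE_lattice_count_translate_le[OF assms(1) lattice_offset covered]
  proof (intro AE_periodic_translate_eq)
    show "(\<integral>\<^sup>+y. of_nat (?N y) * indicator ?D y \<partial>lborel) \<noteq> \<infinity>"
      using emeasure_bounded_finite[OF assms(1)] by (simp add: nn_integral_lattice_count assms)
  qed (auto elim!: eventually_mono simp: lattice_count_periodic)
  then have invariant: "AE x in lborel. ?N (x + u) = ?N x"
    by simp
  have "(\<lambda>x. real (?N x)) \<in> borel_measurable borel"
    using borel_measurable_enn2real[of "\<lambda>x. of_nat (?N x) :: ennreal"] by simp
  then obtain k where k: "AE x in lborel. ?N x = k"
    using torus_rotation_ergodic_AE_const[OF ergodic _ _ invariant] lattice_count_periodic
    by blast
  have "emeasure lborel A = (\<integral>\<^sup>+y. of_nat k * indicator ?D y \<partial>lborel)"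
    unfolding nn_integral_lattice_count[OF assms(1,2), symmetric]
    using k by (intro nn_integral_cong_AE) (auto elim!: eventually_mono)
  also have "\<dots> = ennreal (real k * \<bar>det (\<chi> i. w i)\<bar>)"
    by (simp add: nn_integral_cmult_indicator emeasure_fundamental_domain ennreal_mult'
        ennreal_of_nat_eq_real_of_nat)
  finally have "measure lborel A = real k * \<bar>det (\<chi> i. w i)\<bar>"
    by (intro measure_eq_emeasure_eq_ennreal) simp_all
  then show ?thesis ..
qed

end

section \<open>Piecewise translations\<close>

lemma ex_all_of_antimono_finite:
  fixes Q :: "'i::finite \<Rightarrow> nat \<Rightarrow> bool"
  assumes ex: "\<And>n. \<exists>i. Q i n"
    and antimono: "\<And>i m n. m \<le> n \<Longrightarrow> Q i n \<Longrightarrow> Q i m"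
  shows "\<exists>i. \<forall>n. Q i n"
proof (rule ccontr)
  assume "\<nexists>i. \<forall>n. Q i n"
  then obtain bad where bad: "\<And>i. \<not> Q i (bad i)"
    by metis
  obtain i where "Q i (Max (range bad))"
    using ex by blast
  then have "Q i (bad i)"
    by (rule antimono[rotated]) simp
  with bad show False
    by blast
qed

locale piecewise_translation =
  fixes \<Omega> :: "'a::euclidean_space set"
    and P :: "'i::finite \<Rightarrow> 'a set"
    and v :: "'i \<Rightarrow> 'a"
    and idx :: "'a \<Rightarrow> 'i"
  assumes compact_domain: "compact \<Omega>"
    and closed_piece: "\<And>i. closed (P i)"
    and piece_overlap: "\<And>i j. i \<noteq> j \<Longrightarrow> P i \<inter> P j \<subseteq> frontier (P j)"
    and null_frontier: "\<And>i. frontier (P i) \<in> null_sets lborel"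
    and in_piece_idx: "\<And>x. x \<in> \<Omega> \<Longrightarrow> x \<in> P (idx x)"
    and translate_piece: "\<And>i x. x \<in> P i \<Longrightarrow> x + v i \<in> \<Omega>"
begin

abbreviation F :: "'a \<Rightarrow> 'a" where
  "F \<equiv> \<lambda>x. x + v (idx x)"

lemma closed_iter_sets: "closed (iter_sets F \<Omega> n)"
  by (cases n) (simp_all add: compact_imp_closed compact_domain)

lemma iter_sets_Suc_subset: "iter_sets F \<Omega> (Suc n) \<subseteq> iter_sets F \<Omega> n"
proof (induction n)
  case 0
  have "F ` \<Omega> \<subseteq> \<Omega>"
    using in_piece_idx translate_piece by blast
  then show ?case
    by (simp add: closure_minimal compact_imp_closed compact_domain)
next
  case (Suc n)
  then show ?case
    by (simp add: closure_mono image_mono)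
qed

lemma iter_sets_antimono: "m \<le> n \<Longrightarrow> iter_sets F \<Omega> n \<subseteq> iter_sets F \<Omega> m"
  using decseq_SucI[of "iter_sets F \<Omega>", OF iter_sets_Suc_subset] by (simp add: decseq_def)

lemma iter_sets_subset: "iter_sets F \<Omega> n \<subseteq> \<Omega>"
  using iter_sets_antimono[of 0 n] by simp

lemma compact_attractor: "compact (attractor F \<Omega>)"
proof -
  have "attractor F \<Omega> = \<Omega> \<inter> (\<Inter>n. iter_sets F \<Omega> n)"
    using iter_sets_antimono[of 0] by (auto simp: attractor_def)
  then show ?thesis
    using compact_domain closed_iter_sets by (simp add: closed_INT compact_Int_closed)
qed

definition jump_set :: "'a set" where
  "jump_set = (\<Union>i. (\<lambda>x. x + v i) ` frontier (P i))"

lemma null_jump_set: "jump_set \<in> null_sets lborel"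
proof -
  have "(\<lambda>x. x + v i) ` frontier (P i) = {x. x - v i \<in> frontier (P i)}" for i
    by force
  then show ?thesis
    unfolding jump_set_def using null_frontier
    by (simp add: null_sets_translation null_sets_UN)
qed

lemma closure_image_subset:
  assumes "closed T" "T \<subseteq> \<Omega>"
  shows "closure (F ` T) \<subseteq> F ` T \<union> jump_set"
proof -
  define C where "C = (\<Union>i. (\<lambda>x. x + v i) ` (T \<inter> P i))"
  have "F ` T \<subseteq> C"
    using assms(2) in_piece_idx by (fastforce simp: C_def)
  moreover have "closed C"
  proof -
    have "(\<lambda>x. x + v i) ` (T \<inter> P i) = (+) (v i) ` (T \<inter> P i)" for i
      by (auto simp: add.commute)
    then show ?thesis
      unfolding C_def using assms(1) closed_piece
      by (simp, intro closed_UN) (simp_all add: closed_translation closed_Int)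
  qed
  ultimately have "closure (F ` T) \<subseteq> C"
    by (rule closure_minimal)
  also have "C \<subseteq> F ` T \<union> jump_set"
  proof
    fix y
    assume "y \<in> C"
    then obtain i x where x: "x \<in> T" "x \<in> P i" "y = x + v i"
      unfolding C_def by blast
    show "y \<in> F ` T \<union> jump_set"
    proof (cases "idx x = i")
      case False
      then have "x \<in> frontier (P i)"
        using piece_overlap[OF False] in_piece_idx x assms(2) by blast
      then show ?thesis
        using x by (auto simp: jump_set_def)
    qed (use x in auto)
  qed
  finally show ?thesis .
qed

lemma attractor_preimage:
  assumes "y \<in> attractor F \<Omega>" "y \<notin> jump_set"
  shows "y \<in> F ` attractor F \<Omega>"
proof -
  define Q where "Q i n \<longleftrightarrow> y - v i \<in> iter_sets F \<Omega> n \<and> F (y - v i) = y" for i n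
  have "\<exists>i. Q i n" for n
  proof -
    have "y \<in> closure (F ` iter_sets F \<Omega> n)"
      using assms(1) unfolding attractor_def by (metis INT_iff UNIV_I iter_sets.simps(2))
    then obtain x where "x \<in> iter_sets F \<Omega> n" "y = F x"
      using closure_image_subset[OF closed_iter_sets iter_sets_subset] assms(2) by blast
    then show ?thesis
      unfolding Q_def by (intro exI[of _ "idx x"]) simp
  qed
  moreover have "Q i m" if "m \<le> n" "Q i n" for i m n
    using that iter_sets_antimono unfolding Q_def by blast
  ultimately obtain i where "\<forall>n. Q i n"
    using ex_all_of_antimono_finite by metis
  then show ?thesis
    unfolding Q_def attractor_def by (intro image_eqI[where x="y - v i"]) auto
qed

lemma AE_attractor_preimage: "AE y in lborel. y \<in> attractor F \<Omega> \<longrightarrow> y \<in> F ` attractor F \<Omega>"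
  using AE_not_in[OF null_jump_set] by eventually_elim (use attractor_preimage in blast)

end

theorem corollary2p3:
  fixes \<Omega> :: "(real^'n) set"
    and P :: "'n option \<Rightarrow> (real^'n) set"
    and v :: "'n option \<Rightarrow> real^'n"
    and idx :: "real^'n \<Rightarrow> 'n option"
  assumes "region \<Omega>"
    and "\<Omega> = (\<Union>i. P i)"
    and "\<And>i. region (P i)"
    and "\<And>i j. i \<noteq> j \<Longrightarrow> P i \<inter> P j \<subseteq> frontier (P i) \<inter> frontier (P j)"
    and "\<And>i. frontier (P i) \<in> null_sets lebesgue"
    and "\<And>i x. x \<in> P i \<Longrightarrow> x + v i \<in> \<Omega>"
    and "\<And>x. x \<in> \<Omega> \<Longrightarrow> x \<in> P (idx x)"
    and "idx \<in> measurable lebesgue (count_space UNIV)"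
    and "inj (\<lambda>i. v (Some i) - v None)"
    and "independent (range (\<lambda>i. v (Some i) - v None))"
    and "torus_rotation_ergodic (gen_lattice (\<lambda>i. v (Some i) - v None)) (v None)"
  shows "measure lebesgue (attractor (\<lambda>x. x + v (idx x)) \<Omega>)
           / \<bar>det (\<chi> i. v (Some i) - v None)\<bar> \<in> \<nat>"
proof -
  define w where "w i = v (Some i) - v None" for i
  interpret piecewise_translation \<Omega> P v idx
  proof
    show "compact \<Omega>" and "closed (P i)" for i
      using assms(1,3) by (simp_all add: region_def compact_imp_closed)
    show "frontier (P i) \<in> null_sets lborel" for i
      using assms(5)[of i] by (simp add: null_sets_completion_iff)
  qed (use assms(4,6,7) in blast)+
  interpret lattice_basis w
    using det_nonzero_if_independent_rows assms(9,10) by unfold_locales (simp add: w_def[abs_def])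
  have offset: "F y - (y + v None) \<in> gen_lattice w" for y
    using differences_in_gen_lattice[of v "idx y"] by (simp add: w_def[abs_def] algebra_simps)
  have ergodic: "torus_rotation_ergodic (gen_lattice w) (v None)"
    using assms(11) by (simp add: w_def[abs_def])
  have attractor_borel: "attractor F \<Omega> \<in> sets borel"
    by (simp add: borel_closed compact_imp_closed compact_attractor)
  obtain k :: nat where "measure lborel (attractor F \<Omega>) = real k * \<bar>det (\<chi> i. w i)\<bar>"
    using measure_eq_multiple_of_covolume[OF compact_imp_bounded[OF compact_attractor] attractor_borel
        offset AE_attractor_preimage ergodic] by blast
  then show ?thesis
    using det_basis_nonzero attractor_borel by (simp add: w_def)
qed

end
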